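(* Let $f\colon X\to Y$ be a function of metric spaces and $A,B\subset X$. Suppose all $(r^A_X,r^A_Y)$-components of $A$ are $(R^A_X,R^A_Y)$-bounded and all $(r^B_X,r^B_Y)$-components of $B$ are $(R^B_X,R^B_Y)$-bounded. If $R^B_X+2r^B_X<r^A_X$ and $R^B_Y+2r^B_Y<r^A_Y$, then all $(r^B_X,r^B_Y)$-components of $A\cup B$ are $(R^A_X+2r^A_X,\,R^A_Y+2r^A_Y)$-bounded.
   Context: For $f\colon X\to Y$ and positive numbers $r_X,r_Y$: a set $C\subset X$ is $(r_X,r_Y)$-bounded if $d_X(x,x')\le r_X$ and $d_Y(f(x),f(x'))\le r_Y$ for all $x,x'\in C$. An $(r_X,r_Y)$-chain in $C$ is a sequence $x_1,\dots,x_j$ of points of $C$ such that each pair $\{x_i,x_{i+1}\}$ is $(r_X,r_Y)$-bounded. The $(r_X,r_Y)$-components of $C$ are the maximal subsets of $C$ any two points of which are joined by an $(r_X,r_Y)$-chain in $C$. *)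

theory Defs
  imports "HOL-Analysis.Analysis"
begin

definition rbounded :: "('a::metric_space \<Rightarrow> 'b::metric_space) \<Rightarrow> real \<Rightarrow> real \<Rightarrow> 'a set \<Rightarrow> bool" where
  "rbounded f rX rY C \<longleftrightarrow>
     (\<forall>x\<in>C. \<forall>x'\<in>C. dist x x' \<le> rX \<and> dist (f x) (f x') \<le> rY)"

definition rchain :: "('a::metric_space \<Rightarrow> 'b::metric_space) \<Rightarrow> real \<Rightarrow> real \<Rightarrow> 'a set \<Rightarrow> 'a list \<Rightarrow> bool" where
  "rchain f rX rY C xs \<longleftrightarrow> xs \<noteq> [] \<and> set xs \<subseteq> C \<and>
     (\<forall>i. Suc i < length xs \<longrightarrow> rbounded f rX rY {xs ! i, xs ! Suc i})"

definition rjoined :: "('a::metric_space \<Rightarrow> 'b::metric_space) \<Rightarrow> real \<Rightarrow> real \<Rightarrow> 'a set \<Rightarrow> 'a \<Rightarrow> 'a \<Rightarrow> bool" where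
  "rjoined f rX rY C x y \<longleftrightarrow>
     (\<exists>xs. rchain f rX rY C xs \<and> hd xs = x \<and> last xs = y)"

definition rcomponent :: "('a::metric_space \<Rightarrow> 'b::metric_space) \<Rightarrow> real \<Rightarrow> real \<Rightarrow> 'a set \<Rightarrow> 'a set \<Rightarrow> bool" where
  "rcomponent f rX rY C D \<longleftrightarrow>
     D \<subseteq> C \<and> (\<forall>x\<in>D. \<forall>y\<in>D. rjoined f rX rY C x y) \<and>
     (\<forall>E. D \<subseteq> E \<and> E \<subseteq> C \<and> (\<forall>x\<in>E. \<forall>y\<in>E. rjoined f rX rY C x y) \<longrightarrow> E = D)"

end

theory Submission
  imports Defs
begin

text \<open>
  Being joined by an (r, s)-chain in C is the reflexive-transitive closure of the relation
  "is an (r, s)-bounded pair of points of C"; so the (r, s)-components are its classes, and all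
  of them are (R, S)-bounded iff any two joined points form an (R, S)-bounded pair.

  Write rA for (rAX, rAY) etc.; every estimate is made in both coordinates at once. Follow an
  rB-chain in A \<union> B. A stretch of it outside A lies in one rB-component of B, of diameter at
  most RB. Two points of A separated only by such a stretch are thus at most RB + 2 rB < rA
  apart, so the points of A met by the chain lie in one rA-component of A, of diameter at most
  RA, and every other point of the chain is within RB + rB < rA of one of them. A chain that
  never meets A stays in one rB-component of B.
\<close>

lemma rbounded_pairsI:
  "(\<And>x y. x \<in> D \<Longrightarrow> y \<in> D \<Longrightarrow> rbounded f r s {x, y}) \<Longrightarrow> rbounded f r s D"
  unfolding rbounded_def by blast

lemma rbounded_subset: "rbounded f r s D \<Longrightarrow> E \<subseteq> D \<Longrightarrow> rbounded f r s E"
  unfolding rbounded_def by blast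

lemma rbounded_mono: "rbounded f r s D \<Longrightarrow> r \<le> r' \<Longrightarrow> s \<le> s' \<Longrightarrow> rbounded f r' s' D"
  unfolding rbounded_def by force

lemma rbounded_pair_triangle:
  assumes "rbounded f r s {x, y}" and "rbounded f r' s' {y, z}"
  shows "rbounded f (r + r') (s + s') {x, z}"
proof -
  have "dist x z \<le> dist x y + dist y z" "dist (f x) (f z) \<le> dist (f x) (f y) + dist (f y) (f z)"
    by (rule dist_triangle)+
  with assms show ?thesis
    unfolding rbounded_def by (auto simp: dist_commute)
qed

lemma rchain_iff_successively:
  "rchain f r s C xs \<longleftrightarrow>
     xs \<noteq> [] \<and> set xs \<subseteq> C \<and> successively (\<lambda>u v. rbounded f r s {u, v}) xs"
  by (simp add: rchain_def successively_conv_nth)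

lemma rchain_Cons:
  "rchain f r s C (x # xs) \<longleftrightarrow> x \<in> C \<and> (xs = [] \<or> rbounded f r s {x, hd xs} \<and> rchain f r s C xs)"
  by (auto simp: rchain_iff_successively successively_Cons)

lemma rchain_rtranclp:
  assumes "rchain f r s C xs"
  shows "(\<lambda>u v. u \<in> C \<and> v \<in> C \<and> rbounded f r s {u, v})\<^sup>*\<^sup>* (hd xs) (last xs)"
    (is "?step\<^sup>*\<^sup>* _ _")
  using assms
proof (induction xs)
  case (Cons x xs)
  show ?case
  proof (cases "xs = []")
    case False
    with Cons.prems have "x \<in> C" "rbounded f r s {x, hd xs}" "rchain f r s C xs"
      by (simp_all add: rchain_Cons)
    moreover from \<open>rchain f r s C xs\<close> have "hd xs \<in> C"
      unfolding rchain_def by (metis hd_in_set subsetD)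
    ultimately have "?step\<^sup>*\<^sup>* x (last xs)"
      using Cons.IH by (blast intro: converse_rtranclp_into_rtranclp)
    with False show ?thesis
      by simp
  qed simp
qed (simp add: rchain_def)

lemma rjoined_iff_rtranclp:
  "rjoined f r s C x y \<longleftrightarrow>
     x \<in> C \<and> y \<in> C \<and> (\<lambda>u v. u \<in> C \<and> v \<in> C \<and> rbounded f r s {u, v})\<^sup>*\<^sup>* x y"
  (is "_ \<longleftrightarrow> _ \<and> _ \<and> ?step\<^sup>*\<^sup>* x y")
proof
  show "x \<in> C \<and> y \<in> C \<and> ?step\<^sup>*\<^sup>* x y" if "rjoined f r s C x y"
  proof -
    from that obtain xs where xs: "rchain f r s C xs" "hd xs = x" "last xs = y"
      unfolding rjoined_def by blast
    then have "hd xs \<in> C" "last xs \<in> C"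
      unfolding rchain_def by (auto intro: hd_in_set last_in_set)
    with xs rchain_rtranclp show ?thesis
      by blast
  qed
next
  assume "x \<in> C \<and> y \<in> C \<and> ?step\<^sup>*\<^sup>* x y"
  then have "?step\<^sup>*\<^sup>* x y" and "y \<in> C" by auto
  then show "rjoined f r s C x y"
  proof (induction rule: converse_rtranclp_induct)
    case base
    then show ?case
      unfolding rjoined_def by (intro exI[of _ "[y]"]) (simp add: rchain_def)
  next
    case (step x x')
    then obtain xs where xs: "rchain f r s C xs" "hd xs = x'" "last xs = y"
      unfolding rjoined_def by blast
    then have "xs \<noteq> []"
      by (simp add: rchain_def)
    with xs step.hyps(1) have "rchain f r s C (x # xs)"
      by (simp add: rchain_Cons)
    with xs \<open>xs \<noteq> []\<close> show ?case
      unfolding rjoined_def by (intro exI[of _ "x # xs"]) simp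
  qed
qed

lemma rjoined_refl: "x \<in> C \<Longrightarrow> rjoined f r s C x x"
  by (simp add: rjoined_iff_rtranclp)

lemma rjoined_Cons:
  "x \<in> C \<Longrightarrow> rbounded f r s {x, x'} \<Longrightarrow> rjoined f r s C x' y \<Longrightarrow> rjoined f r s C x y"
  by (auto simp: rjoined_iff_rtranclp intro: converse_rtranclp_into_rtranclp)

lemma rjoined_sym: "rjoined f r s C x y \<Longrightarrow> rjoined f r s C y x"
proof -
  have "symp (\<lambda>u v. u \<in> C \<and> v \<in> C \<and> rbounded f r s {u, v})"
    by (auto intro: sympI simp: insert_commute)
  then show "rjoined f r s C x y \<Longrightarrow> rjoined f r s C y x"
    unfolding rjoined_iff_rtranclp by (blast dest: sympD[OF symp_rtranclp])
qed

lemma rjoined_trans: "rjoined f r s C x y \<Longrightarrow> rjoined f r s C y z \<Longrightarrow> rjoined f r s C x z"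
  unfolding rjoined_iff_rtranclp by (meson rtranclp_trans)

lemma rjoined_converse_induct [consumes 1, case_names refl step]:
  assumes "rjoined f r s C x y"
    and "\<And>y. y \<in> C \<Longrightarrow> P y y"
    and "\<And>x x' y. x \<in> C \<Longrightarrow> rbounded f r s {x, x'} \<Longrightarrow> rjoined f r s C x' y \<Longrightarrow> P x' y \<Longrightarrow> P x y"
  shows "P x y"
proof -
  from assms(1) have "(\<lambda>u v. u \<in> C \<and> v \<in> C \<and> rbounded f r s {u, v})\<^sup>*\<^sup>* x y" and "y \<in> C"
    by (simp_all add: rjoined_iff_rtranclp)
  then show ?thesis
  proof (induction rule: converse_rtranclp_induct)
    case (step x x')
    then show ?case
      using assms(2,3) by (auto simp: rjoined_iff_rtranclp)
  qed (use assms(2) in blast)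
qed

lemma rjoined_mem: "rjoined f r s C x y \<Longrightarrow> x \<in> C \<and> y \<in> C"
  by (simp add: rjoined_iff_rtranclp)

lemma rcomponent_rjoined_class:
  assumes "a \<in> C"
  shows "rcomponent f r s C {y. rjoined f r s C a y}" (is "rcomponent f r s C ?D")
proof -
  have "?D \<subseteq> C"
    using rjoined_mem by blast
  moreover have "rjoined f r s C x y" if "x \<in> ?D" "y \<in> ?D" for x y
    using that by (metis mem_Collect_eq rjoined_sym rjoined_trans)
  moreover have "E = ?D" if "?D \<subseteq> E" "\<forall>x\<in>E. \<forall>y\<in>E. rjoined f r s C x y" for E
  proof -
    have "a \<in> E"
      using that(1) assms rjoined_refl by blast
    with that show ?thesis
      by blast
  qed
  ultimately show ?thesis
    unfolding rcomponent_def by blast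
qed

lemma rcomponent_rjoined:
  assumes "rcomponent f r s C D" "x \<in> D" "y \<in> D"
  shows "rjoined f r s C x y"
  using assms(1)[unfolded rcomponent_def, THEN conjunct2, THEN conjunct1] assms(2,3) by blast

lemma rcomponents_rbounded_iff:
  "(\<forall>D. rcomponent f r s C D \<longrightarrow> rbounded f R S D) \<longleftrightarrow>
     (\<forall>x y. rjoined f r s C x y \<longrightarrow> rbounded f R S {x, y})"
proof (intro iffI allI impI)
  fix x y assume bounded: "\<forall>D. rcomponent f r s C D \<longrightarrow> rbounded f R S D"
    and xy: "rjoined f r s C x y"
  then have "x \<in> C"
    by (simp add: rjoined_mem)
  with bounded have "rbounded f R S {z. rjoined f r s C x z}"
    using rcomponent_rjoined_class by blast
  then show "rbounded f R S {x, y}"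
    by (rule rbounded_subset) (simp add: xy rjoined_refl \<open>x \<in> C\<close>)
next
  fix D assume bounded: "\<forall>x y. rjoined f r s C x y \<longrightarrow> rbounded f R S {x, y}"
    and D: "rcomponent f r s C D"
  show "rbounded f R S D"
  proof (rule rbounded_pairsI)
    fix x y assume "x \<in> D" "y \<in> D"
    with D have "rjoined f r s C x y"
      by (rule rcomponent_rjoined)
    then show "rbounded f R S {x, y}"
      by (rule bounded[rule_format])
  qed
qed

definition rjoined_into :: "('a::metric_space \<Rightarrow> 'b::metric_space) \<Rightarrow> real \<Rightarrow> real \<Rightarrow> 'a set \<Rightarrow> 'a \<Rightarrow> 'a \<Rightarrow> bool"
  where "rjoined_into f r s B x a \<longleftrightarrow> x = a \<or> (\<exists>b. rjoined f r s B x b \<and> rbounded f r s {b, a})"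

lemma rjoined_into_Cons:
  assumes "x \<in> B" "rbounded f r s {x, x'}" "rjoined_into f r s B x' a"
  shows "rjoined_into f r s B x a"
  using assms rjoined_refl rjoined_Cons unfolding rjoined_into_def by metis

lemma rjoined_into_rbounded:
  assumes "0 \<le> r" "0 \<le> s" "0 \<le> R" "0 \<le> S"
    and B_bounded: "\<And>b b'. rjoined f r s B b b' \<Longrightarrow> rbounded f R S {b, b'}"
    and "rjoined_into f r s B x a"
  shows "rbounded f (R + r) (S + s) {x, a}"
  using assms(6) unfolding rjoined_into_def
proof (elim disjE exE conjE)
  assume "x = a"
  then show ?thesis
    using assms(1-4) by (simp add: rbounded_def)
next
  fix b assume "rjoined f r s B x b" "rbounded f r s {b, a}"
  then show ?thesis
    using B_bounded rbounded_pair_triangle by blast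
qed

lemma rjoined_union_cases:
  assumes B_bounded: "\<And>b b'. rjoined f rBX rBY B b b' \<Longrightarrow> rbounded f RBX RBY {b, b'}"
    and nonneg: "0 \<le> rBX" "0 \<le> rBY" "0 \<le> RBX" "0 \<le> RBY"
    and hX: "RBX + 2 * rBX \<le> rAX" and hY: "RBY + 2 * rBY \<le> rAY"
    and "rjoined f rBX rBY (A \<union> B) x y"
  shows "rjoined f rBX rBY B x y \<or>
    (\<exists>a a'. rjoined_into f rBX rBY B x a \<and> rjoined f rAX rAY A a a' \<and> rjoined_into f rBX rBY B y a')"
  using \<open>rjoined f rBX rBY (A \<union> B) x y\<close>
proof (induction rule: rjoined_converse_induct)
  case (refl y)
  show ?case
  proof (cases "y \<in> B")
    case True
    then show ?thesis
      by (simp add: rjoined_refl)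
  next
    case False
    with refl have "rjoined f rAX rAY A y y"
      by (simp add: rjoined_refl)
    then show ?thesis
      unfolding rjoined_into_def by blast
  qed
next
  case (step x x' y)
  consider (inB) "x \<in> B" | (inA) "x \<in> A"
    using step.hyps(1) by blast
  then show ?case
  proof cases
    case inB
    then show ?thesis
      using step.IH step.hyps(2) by (metis rjoined_Cons rjoined_into_Cons)
  next
    case inA
    have x_into_x: "rjoined_into f rBX rBY B x x"
      by (simp add: rjoined_into_def)
    from step.IH show ?thesis
    proof (elim disjE exE conjE)
      assume "rjoined f rBX rBY B x' y"
      then have "rjoined_into f rBX rBY B y x"
        using step.hyps(2) unfolding rjoined_into_def by (auto simp: insert_commute intro: rjoined_sym)
      moreover have "rjoined f rAX rAY A x x"
        using inA by (rule rjoined_refl)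
      ultimately show ?thesis
        using x_into_x by blast
    next
      fix a a' assume x'a: "rjoined_into f rBX rBY B x' a"
        and aa': "rjoined f rAX rAY A a a'" and ya': "rjoined_into f rBX rBY B y a'"
      \<comment> \<open>This is where RB + 2 rB \<le> rA enters: x is a single rA-step from the A-point a.\<close>
      have "rbounded f (RBX + rBX) (RBY + rBY) {x', a}"
        by (rule rjoined_into_rbounded[OF nonneg _ x'a]) (rule B_bounded)
      with step.hyps(2) have "rbounded f (rBX + (RBX + rBX)) (rBY + (RBY + rBY)) {x, a}"
        by (rule rbounded_pair_triangle)
      then have "rbounded f rAX rAY {x, a}"
        by (rule rbounded_mono) (use hX hY in auto)
      then have "rjoined f rAX rAY A x a'"
        by (rule rjoined_Cons[OF inA _ aa'])
      then show ?thesis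
        using x_into_x ya' by blast
    qed
  qed
qed

lemma rjoined_union_rbounded:
  assumes A_bounded: "\<And>a a'. rjoined f rAX rAY A a a' \<Longrightarrow> rbounded f RAX RAY {a, a'}"
    and B_bounded: "\<And>b b'. rjoined f rBX rBY B b b' \<Longrightarrow> rbounded f RBX RBY {b, b'}"
    and nonneg: "0 \<le> rBX" "0 \<le> rBY" "0 \<le> RBX" "0 \<le> RBY" "0 \<le> RAX" "0 \<le> RAY"
    and hX: "RBX + 2 * rBX \<le> rAX" and hY: "RBY + 2 * rBY \<le> rAY"
    and xy: "rjoined f rBX rBY (A \<union> B) x y"
  shows "rbounded f (RAX + 2 * rAX) (RAY + 2 * rAY) {x, y}"
proof -
  have "rjoined f rBX rBY B x y \<or>
    (\<exists>a a'. rjoined_into f rBX rBY B x a \<and> rjoined f rAX rAY A a a' \<and> rjoined_into f rBX rBY B y a')"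
    by (rule rjoined_union_cases[OF _ nonneg(1-4) hX hY xy]) (rule B_bounded)
  then show ?thesis
  proof (elim disjE exE conjE)
    assume "rjoined f rBX rBY B x y"
    then show ?thesis
      by (rule B_bounded[THEN rbounded_mono]) (use nonneg hX hY in auto)
  next
    fix a a' assume xa: "rjoined_into f rBX rBY B x a" and aa': "rjoined f rAX rAY A a a'"
      and ya': "rjoined_into f rBX rBY B y a'"
    have into_rbounded: "rbounded f rAX rAY {u, b}" if "rjoined_into f rBX rBY B u b" for u b
    proof -
      have "rbounded f (RBX + rBX) (RBY + rBY) {u, b}"
        by (rule rjoined_into_rbounded[OF nonneg(1-4) _ that]) (rule B_bounded)
      then show ?thesis
        by (rule rbounded_mono) (use nonneg hX hY in auto)
    qed
    have "rbounded f rAX rAY {x, a}" "rbounded f RAX RAY {a, a'}" "rbounded f rAX rAY {a', y}"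
      using into_rbounded[OF xa] A_bounded[OF aa'] into_rbounded[OF ya'] by (simp_all add: insert_commute)
    then have "rbounded f (rAX + RAX + rAX) (rAY + RAY + rAY) {x, y}"
      by (meson rbounded_pair_triangle)
    then show ?thesis
      by (rule rbounded_mono) auto
  qed
qed

theorem mainTheorem8:
  fixes f :: "'a::metric_space \<Rightarrow> 'b::metric_space"
    and A B :: "'a set"
    and rAX rAY RAX RAY rBX rBY RBX RBY :: real
  assumes pos: "rAX > 0" "rAY > 0" "RAX > 0" "RAY > 0"
               "rBX > 0" "rBY > 0" "RBX > 0" "RBY > 0"
    and hA: "\<And>D. rcomponent f rAX rAY A D \<Longrightarrow> rbounded f RAX RAY D"
    and hB: "\<And>D. rcomponent f rBX rBY B D \<Longrightarrow> rbounded f RBX RBY D"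
    and hX: "RBX + 2 * rBX < rAX"
    and hY: "RBY + 2 * rBY < rAY"
  shows "\<And>D. rcomponent f rBX rBY (A \<union> B) D \<Longrightarrow>
           rbounded f (RAX + 2 * rAX) (RAY + 2 * rAY) D"
proof -
  have "\<forall>x y. rjoined f rBX rBY (A \<union> B) x y \<longrightarrow> rbounded f (RAX + 2 * rAX) (RAY + 2 * rAY) {x, y}"
  proof (intro allI impI rjoined_union_rbounded)
    show "rbounded f RAX RAY {a, a'}" if "rjoined f rAX rAY A a a'" for a a'
      using hA that rcomponents_rbounded_iff by blast
    show "rbounded f RBX RBY {b, b'}" if "rjoined f rBX rBY B b b'" for b b'
      using hB that rcomponents_rbounded_iff by blast
  qed (use pos hX hY in auto)
  then show "\<And>D. rcomponent f rBX rBY (A \<union> B) D \<Longrightarrow> rbounded f (RAX + 2 * rAX) (RAY + 2 * rAY) D"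
    using rcomponents_rbounded_iff by blast
qed

end
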